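(* Let $\mathbb{E}$ be the free $\mathbb{C}[\theta]$-module of rank $6$ with basis $\omega_1,\dots,\omega_6$ and connection determined by $$\theta\nabla_{\partial_\theta}\omega_j=d_j\,\omega_j-\theta^{-1}\omega_{j+1}\ (1\le j\le5),\qquad\theta\nabla_{\partial_\theta}\omega_6=d_6\,\omega_6,\qquad (d_1,\dots,d_6)=(2,1,2,3,4,3).$$ (This is the logarithmic Brieskorn lattice $G_0(h^{\star_3})$ of the linear free divisor $h^{\star_3}=(ae-bd)(af-cd)(bf-ce)$ on $\mathbb{C}^6$ with coordinates $a,b,c,d,e,f$, the discriminant of the star quiver with three exterior vertices, whose Bernstein polynomial is $(s+\frac43)(s+1)^4(s+\frac23)$.) Then $\mathbb{E}$ is regular singular at $\theta=0$ and its spectrum at $\theta=0$ is $$\mathrm{Sp}(\mathbb{E},\nabla)=(-2,1,2,3,4,7),$$ i.e. the multiset $\{-2,1,2,3,4,7\}$.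
   Context: Spectrum at $\theta=0$: let $(\mathbb{E},\nabla)$ be a free $\mathbb{C}[\theta]$-module of finite rank with a connection having a pole of order at most two at $\theta=0$, regular singular there, such that $\mathbb{M}=\mathbb{E}\otimes\mathbb{C}[\theta,\theta^{-1}]$ has quasi-unipotent monodromy. Let $V^\bullet\mathbb{M}$ be the canonical (Kashiwara–Malgrange) $V$-filtration at $\theta=0$, indexed by $\mathbb{Q}$ and written decreasingly: $V^\alpha\mathbb{M}$ is the (germ at $0$ of the) lattice generated over $\mathbb{C}\{\theta\}$ by the elementary sections $s$ with $(\theta\nabla_{\partial_\theta}-\beta)^Ns=0$ for some $N$ and some $\beta\ge\alpha$. Put $V^{>\alpha}\mathbb{M}=\bigcup_{\beta>\alpha}V^\beta\mathbb{M}$. Then $\mathrm{Sp}(\mathbb{E},\nabla)=\sum_{\alpha\in\mathbb{Q}}\dim_{\mathbb{C}}\Big(\frac{V^\alpha\mathbb{M}\cap\mathbb{E}}{V^\alpha\mathbb{M}\cap\theta\mathbb{E}+V^{>\alpha}\mathbb{M}\cap\mathbb{E}}\Big)\cdot\alpha\in\mathbb{Z}[\mathbb{Q}]$, written as the multiset of the $\alpha$'s. *)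

theory Defs
  imports "HOL-Analysis.Analysis" "HOL-Computational_Algebra.Formal_Laurent_Series"
begin

text \<open>Vectors of rank n are modelled as maps nat to complex Laurent series, with
 components of index at least n equal to zero; component i is the coefficient of the
 (i+1)-st basis vector. The germ at theta=0 of M is the space of vectors whose
 components are convergent Laurent series (meromorphic germs).\<close>

type_synonym vec = "nat \<Rightarrow> complex fls"

definition conv_fls :: "complex fls \<Rightarrow> bool" where
  "conv_fls f \<longleftrightarrow> fps_conv_radius (fls_base_factor_to_fps f) > 0"

definition conv_ps :: "complex fls \<Rightarrow> bool" where
  "conv_ps f \<longleftrightarrow> conv_fls f \<and> (\<forall>k<0. fls_nth f k = 0)"

definition poly_fls :: "complex fls \<Rightarrow> bool" where
  "poly_fls f \<longleftrightarrow> (\<forall>k<0. fls_nth f k = 0) \<and> (\<exists>m. \<forall>k\<ge>m. fls_nth f k = 0)"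

definition smul :: "complex fls \<Rightarrow> vec \<Rightarrow> vec" where
  "smul f v = (\<lambda>i. f * v i)"

definition vsum :: "nat \<Rightarrow> (nat \<Rightarrow> complex fls) \<Rightarrow> (nat \<Rightarrow> vec) \<Rightarrow> vec" where
  "vsum m c s = (\<lambda>i. \<Sum>k<m. c k * s k i)"

definition Man :: "nat \<Rightarrow> vec set" where
  "Man n = {v. (\<forall>i\<ge>n. v i = 0) \<and> (\<forall>i. conv_fls (v i))}"

definition Emod :: "nat \<Rightarrow> vec set" where
  "Emod n = {v. (\<forall>i\<ge>n. v i = 0) \<and> (\<forall>i. poly_fls (v i))}"

definition thetaE :: "nat \<Rightarrow> vec set" where
  "thetaE n = smul fls_X ` Emod n"

text \<open>theta nabla_{d/dtheta} for the connection with matrix A: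
 theta nabla omega_j = sum_i A i j omega_i\<close>
definition thetaNabla :: "nat \<Rightarrow> (nat \<Rightarrow> nat \<Rightarrow> complex fls) \<Rightarrow> vec \<Rightarrow> vec" where
  "thetaNabla n A v = (\<lambda>i. if i < n then fls_X * fls_deriv (v i) + (\<Sum>j<n. A i j * v j) else 0)"

definition regular_singular :: "nat \<Rightarrow> (nat \<Rightarrow> nat \<Rightarrow> complex fls) \<Rightarrow> bool" where
  "regular_singular n A \<longleftrightarrow>
     (\<exists>m g. (\<forall>k<m. g k \<in> Man n) \<and>
        (let L = {vsum m c g | c. \<forall>k<m. conv_ps (c k)} in
          (\<forall>v\<in>L. thetaNabla n A v \<in> L) \<and>
          (\<forall>v\<in>Man n. \<exists>p::nat. smul (fls_X ^ p) v \<in> L)))"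

definition elementary :: "nat \<Rightarrow> (nat \<Rightarrow> nat \<Rightarrow> complex fls) \<Rightarrow> rat \<Rightarrow> vec \<Rightarrow> bool" where
  "elementary n A \<beta> s \<longleftrightarrow> s \<in> Man n \<and>
     (\<exists>N. ((\<lambda>v. (\<lambda>i. thetaNabla n A v i - fls_const (of_rat \<beta>) * v i)) ^^ N) s = (\<lambda>i. 0))"

definition Vfilt :: "nat \<Rightarrow> (nat \<Rightarrow> nat \<Rightarrow> complex fls) \<Rightarrow> rat \<Rightarrow> vec set" where
  "Vfilt n A \<alpha> = {vsum m c s | m c s. \<forall>k<m. conv_ps (c k) \<and>
                      (\<exists>\<beta>\<ge>\<alpha>. elementary n A \<beta> (s k))}"

definition Vgt :: "nat \<Rightarrow> (nat \<Rightarrow> nat \<Rightarrow> complex fls) \<Rightarrow> rat \<Rightarrow> vec set" where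
  "Vgt n A \<alpha> = (\<Union>\<beta>\<in>{\<beta>. \<beta> > \<alpha>}. Vfilt n A \<beta>)"

text \<open>dim_C (X / Y) = d, for complex subspaces Y of X (scalars act via fls_const)\<close>
definition quot_dim :: "vec set \<Rightarrow> vec set \<Rightarrow> nat \<Rightarrow> bool" where
  "quot_dim X Y d \<longleftrightarrow> (\<exists>S::vec list. length S = d \<and> set S \<subseteq> X \<and>
      (\<forall>c::nat \<Rightarrow> complex. vsum d (\<lambda>k. fls_const (c k)) (\<lambda>k. S ! k) \<in> Y \<longrightarrow> (\<forall>k<d. c k = 0)) \<and>
      (\<forall>x\<in>X. \<exists>c::nat \<Rightarrow> complex. (\<lambda>i. x i - vsum d (\<lambda>k. fls_const (c k)) (\<lambda>k. S ! k) i) \<in> Y))"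

definition spectrum_mult :: "nat \<Rightarrow> (nat \<Rightarrow> nat \<Rightarrow> complex fls) \<Rightarrow> rat \<Rightarrow> nat \<Rightarrow> bool" where
  "spectrum_mult n A \<alpha> d \<longleftrightarrow>
     quot_dim (Vfilt n A \<alpha> \<inter> Emod n)
       {(\<lambda>i. x i + y i) | x y. x \<in> Vfilt n A \<alpha> \<inter> thetaE n \<and> y \<in> Vgt n A \<alpha> \<inter> Emod n} d"

text \<open>The example: d = (2,1,2,3,4,3), 0-indexed basis omega_0..omega_5,
 theta nabla omega_j = d_j omega_j - theta^-1 omega_{j+1}\<close>
definition dvals :: "nat \<Rightarrow> complex" where
  "dvals j = [2,1,2,3,4,3] ! j"

definition Astar :: "nat \<Rightarrow> nat \<Rightarrow> complex fls" where
  "Astar i j = (if i < 6 \<and> j < 6 then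
                  (if i = j then fls_const (dvals j)
                   else if i = j + 1 then - fls_X_inv else 0)
                else 0)"

end

theory Submission
  imports Defs
begin

(* The connection matrix has a pole of order two at theta = 0, but the gauge
   transformation u_k = sum_j Q_kj theta^j v_j (Q a constant unipotent matrix) turns theta nabla
   into theta d/dtheta + N with a CONSTANT matrix N, whose eigenvalues lambda_k are 2, 0, 0, 0, 0, -2
   (the four eigenvalues 0 forming one nilpotent Jordan block).  In these gauge coordinates
   everything is explicit:
   - the C{theta}-lattice with basis "u = e_k" is theta-nabla-stable, so the connection is
     regular singular;
   - an elementary section of eigenvalue beta has u_k concentrated in degree beta - lambda_k,
     hence V^alpha consists of the sections with ord u_k >= alpha - lambda_k for all k.
   A second, polynomial change of basis of E (adapted coordinates p_l, with dual basis sigma_l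
   of E) transforms these order conditions into ord p_l >= alpha - alpha_l, where
   (alpha_0, ..., alpha_5) = (-2, 1, 2, 3, 4, 7).  So E and V^alpha are split simultaneously,
   and the graded piece of E at alpha is spanned by the sigma_l with alpha_l = alpha. *)

section \<open>Orders and convergence of Laurent series\<close>

lemma fls_nth_X_mult [simp]: "fls_nth (fls_X * (f::'a::semiring_1 fls)) i = fls_nth f (i - 1)"
  unfolding fls_X_times_conv_shift(1) by simp

lemma fls_nth_X_power_mult [simp]:
  "fls_nth (fls_X ^ n * (f::'a::semiring_1 fls)) i = fls_nth f (i - int n)"
  by (simp add: fls_X_power_times_conv_shift)

lemma fls_nth_X_inv_mult [simp]:
  "fls_nth (fls_X_inv * (f::'a::division_ring fls)) i = fls_nth f (i + 1)"
  unfolding fls_X_inv_times_conv_shift(1) by simp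

lemma fls_nth_sum: "fls_nth (\<Sum>t\<in>S. f t) i = (\<Sum>t\<in>S. fls_nth (f t) i)"
  by (induction S rule: infinite_finite_induct) auto

(* "val_ge f A": f has order at least A, i.e. no coefficients in degrees below the rational
   bound A.  All conditions defining the V-filtration are conditions of this form. *)
definition val_ge :: "'a::zero fls \<Rightarrow> rat \<Rightarrow> bool" where
  "val_ge f A \<longleftrightarrow> (\<forall>i. of_int i < A \<longrightarrow> fls_nth f i = 0)"

lemma val_ge_mono: "val_ge f A \<Longrightarrow> B \<le> A \<Longrightarrow> val_ge f B"
  unfolding val_ge_def by auto

lemma val_ge_0 [simp]: "val_ge 0 A"
  unfolding val_ge_def by simp

lemma val_ge_add: "val_ge f A \<Longrightarrow> val_ge g A \<Longrightarrow> val_ge (f + g) A"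
  unfolding val_ge_def by auto

lemma val_ge_diff: "val_ge f A \<Longrightarrow> val_ge g A \<Longrightarrow> val_ge (f - g) A"
  unfolding val_ge_def by auto

lemma val_ge_uminus: "val_ge f A \<Longrightarrow> val_ge (- f) A"
  unfolding val_ge_def by auto

lemma val_ge_sum: "(\<And>t. t \<in> S \<Longrightarrow> val_ge (f t) A) \<Longrightarrow> val_ge (\<Sum>t\<in>S. f t) A"
  unfolding val_ge_def by (auto simp: fls_nth_sum intro!: sum.neutral)

lemma val_ge_subdegree:
  assumes "val_ge f A" "f \<noteq> 0" shows "A \<le> of_int (fls_subdegree f)"
proof (rule ccontr)
  assume "\<not> ?thesis"
  with assms(1) have "fls_nth f (fls_subdegree f) = 0" unfolding val_ge_def by auto
  with assms(2) show False by simp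
qed

lemma val_ge_mult:
  fixes f g :: "'a::semiring_no_zero_divisors fls"
  assumes "val_ge f A" "val_ge g B" shows "val_ge (f * g) (A + B)"
proof (cases "f = 0 \<or> g = 0")
  case False
  have "A \<le> of_int (fls_subdegree f)" "B \<le> of_int (fls_subdegree g)"
    using val_ge_subdegree assms False by auto
  then show ?thesis unfolding val_ge_def
  proof (intro allI impI)
    fix i assume "of_int i < A + B"
    with \<open>A \<le> _\<close> \<open>B \<le> _\<close> have "of_int i < (of_int (fls_subdegree f + fls_subdegree g) :: rat)"
      by simp
    then have "i < fls_subdegree f + fls_subdegree g" by linarith
    then show "fls_nth (f * g) i = 0" by (rule fls_times_nth_eq0)
  qed
qed auto

lemma val_ge_const: "c = 0 \<or> A \<le> 0 \<Longrightarrow> val_ge (fls_const c) A"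
  unfolding val_ge_def by auto

lemma val_ge_const_mult:
  "val_ge (f::'a::{comm_monoid_add, mult_zero} fls) A \<Longrightarrow> val_ge (fls_const c * f) A"
  unfolding val_ge_def by auto

lemma val_ge_numeral_mult: "val_ge (f::'a::comm_ring_1 fls) A \<Longrightarrow> val_ge (numeral c * f) A"
  unfolding val_ge_def by simp

lemma val_ge_neg_numeral_mult: "val_ge f A \<Longrightarrow> val_ge (- numeral c * (f::complex fls)) A"
  by (simp add: val_ge_uminus val_ge_numeral_mult)

lemma val_ge_numeral_cancel: "val_ge (numeral c * (f::complex fls)) A \<Longrightarrow> val_ge f A"
  unfolding val_ge_def by simp

lemma val_ge_monomial_mult:
  "val_ge g B \<Longrightarrow> A \<le> B + of_nat n \<Longrightarrow> val_ge (numeral c * fls_X ^ n * (g::complex fls)) A"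
  unfolding val_ge_def by (auto simp: mult.assoc)

lemma val_ge_monomial_cancel:
  assumes "val_ge (numeral c * fls_X ^ n * (g::complex fls)) A"
  shows "val_ge g (A - of_nat n)"
  unfolding val_ge_def
proof (intro allI impI)
  fix i assume "of_int i < A - of_nat n"
  then have "of_int (i + int n) < A" by simp
  with assms have "fls_nth (numeral c * fls_X ^ n * g) (i + int n) = 0" unfolding val_ge_def by blast
  then show "fls_nth g i = 0" by (simp add: mult.assoc)
qed

(* Convergence: the radius of convergence of the coefficient sequence starting in degree k does
   not depend on k, so conv_fls f just says that this radius is positive. *)
definition coeff_radius :: "complex fls \<Rightarrow> int \<Rightarrow> ereal" where
  "coeff_radius f k = conv_radius (\<lambda>n. fls_nth f (int n + k))"

lemma coeff_radius_indep: "coeff_radius f a = coeff_radius f b"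
proof -
  have shift: "coeff_radius f a = coeff_radius f b" if "a \<le> b" for a b
  proof -
    define m where "m = nat (b - a)"
    have e: "\<And>n. int (n + m) + a = int n + b" using that by (simp add: m_def)
    have "coeff_radius f a = conv_radius (\<lambda>n. (\<lambda>n. fls_nth f (int n + a)) (n + m))"
      unfolding coeff_radius_def by (rule conv_radius_shift[symmetric])
    also have "\<dots> = coeff_radius f b" unfolding coeff_radius_def e ..
    finally show ?thesis .
  qed
  show ?thesis by (metis shift linorder_le_cases)
qed

lemma conv_fls_iff_radius: "conv_fls f \<longleftrightarrow> 0 < coeff_radius f 0"
proof -
  have "fps_conv_radius (fls_base_factor_to_fps f) = coeff_radius f (fls_subdegree f)"
    unfolding fps_conv_radius_def coeff_radius_def by (simp add: fls_base_factor_to_fps_nth add.commute)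
  then show ?thesis unfolding conv_fls_def using coeff_radius_indep by metis
qed

definition fin_support :: "'a::zero fls \<Rightarrow> bool" where
  "fin_support f \<longleftrightarrow> (\<exists>M. \<forall>i\<ge>M. fls_nth f i = 0)"

lemma fin_support_conv: "fin_support f \<Longrightarrow> conv_fls f"
proof -
  assume "fin_support f"
  then obtain M where M: "\<forall>i\<ge>M. fls_nth f i = 0" unfolding fin_support_def by auto
  have "coeff_radius f 0 = conv_radius (\<lambda>_. 0::complex)"
    unfolding coeff_radius_def
    by (rule conv_radius_cong') (auto intro!: eventually_mono[OF eventually_ge_at_top[of "nat M"]] simp: M)
  then show ?thesis by (simp add: conv_fls_iff_radius)
qed

lemma conv_add: "conv_fls f \<Longrightarrow> conv_fls g \<Longrightarrow> conv_fls (f + g)"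
  unfolding conv_fls_iff_radius coeff_radius_def
  using conv_radius_add_ge[of "\<lambda>n. fls_nth f (int n + 0)" "\<lambda>n. fls_nth g (int n + 0)"]
  by (auto simp: min_def split: if_splits)

lemma conv_sum: "(\<And>t. t \<in> S \<Longrightarrow> conv_fls (f t)) \<Longrightarrow> conv_fls (\<Sum>t\<in>S. f t)"
proof (induction S rule: infinite_finite_induct)
  case (empty) show ?case by (rule fin_support_conv) (simp add: fin_support_def)
qed (auto intro: conv_add fin_support_conv simp: fin_support_def)

lemma conv_const_mult: "conv_fls f \<Longrightarrow> conv_fls (fls_const c * f)"
proof (cases "c = 0")
  case False
  assume "conv_fls f"
  then show ?thesis unfolding conv_fls_iff_radius coeff_radius_def fls_mult_const_nth
    using conv_radius_cmult_left[OF False, of "\<lambda>n. fls_nth f (int n + 0)"] by simp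
qed (simp add: fls_const_0 fin_support_conv fin_support_def)

lemma conv_X_power_mult: "conv_fls f \<Longrightarrow> conv_fls (fls_X ^ m * f)"
proof -
  assume "conv_fls f"
  have "coeff_radius (fls_X ^ m * f) 0 = coeff_radius f (- int m)" unfolding coeff_radius_def by simp
  then show ?thesis using \<open>conv_fls f\<close> coeff_radius_indep unfolding conv_fls_iff_radius by metis
qed

lemma conv_shift: "conv_fls f \<Longrightarrow> conv_fls (fls_shift m f)"
proof -
  assume "conv_fls f"
  have "coeff_radius (fls_shift m f) 0 = coeff_radius f m" unfolding coeff_radius_def by simp
  then show ?thesis using \<open>conv_fls f\<close> coeff_radius_indep unfolding conv_fls_iff_radius by metis
qed

lemma conv_euler_deriv: "conv_fls f \<Longrightarrow> conv_fls (fls_X * fls_deriv f)"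
proof -
  assume "conv_fls f"
  define A where "A = Abs_fps (\<lambda>n. fls_nth f (int n))"
  have "fps_conv_radius (fps_X * fps_deriv A) \<ge> min (fps_conv_radius fps_X) (fps_conv_radius (fps_deriv A))"
    using fps_conv_radius_mult[of fps_X "fps_deriv A"] by simp
  then have r: "fps_conv_radius (fps_X * fps_deriv A) \<ge> fps_conv_radius A"
    using fps_conv_radius_deriv[of A] by simp
  have "fps_conv_radius A = coeff_radius f 0" unfolding fps_conv_radius_def coeff_radius_def A_def by simp
  moreover have "fps_conv_radius (fps_X * fps_deriv A) = coeff_radius (fls_X * fls_deriv f) 0"
    unfolding fps_conv_radius_def coeff_radius_def A_def
    by (rule conv_radius_cong_weak) (auto simp: of_nat_diff)
  ultimately show ?thesis using \<open>conv_fls f\<close> r unfolding conv_fls_iff_radius by auto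
qed

lemma conv_ps_iff: "conv_ps f \<longleftrightarrow> conv_fls f \<and> val_ge f 0"
  unfolding conv_ps_def val_ge_def by auto

lemma poly_fls_iff: "poly_fls f \<longleftrightarrow> val_ge f 0 \<and> fin_support f"
  unfolding poly_fls_def val_ge_def fin_support_def by auto

lemma conv_ps_sum: "(\<And>t. t \<in> S \<Longrightarrow> conv_ps (f t)) \<Longrightarrow> conv_ps (\<Sum>t\<in>S. f t)"
  unfolding conv_ps_iff by (auto intro!: conv_sum val_ge_sum)

lemma conv_ps_const_mult: "conv_ps f \<Longrightarrow> conv_ps (fls_const c * f)"
  unfolding conv_ps_iff by (auto intro!: conv_const_mult val_ge_const_mult)

lemma conv_ps_add: "conv_ps f \<Longrightarrow> conv_ps g \<Longrightarrow> conv_ps (f + g)"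
  unfolding conv_ps_iff by (auto intro!: conv_add val_ge_add)

lemma conv_ps_X_power_mult: "conv_ps f \<Longrightarrow> conv_ps (fls_X ^ n * f)"
  unfolding conv_ps_iff val_ge_def by (auto intro!: conv_X_power_mult)

lemma conv_ps_euler_deriv: "conv_ps f \<Longrightarrow> conv_ps (fls_X * fls_deriv f)"
  unfolding conv_ps_iff by (auto intro!: conv_euler_deriv simp: val_ge_def)

lemma fin_support_add: "fin_support f \<Longrightarrow> fin_support g \<Longrightarrow> fin_support (f + g)"
  unfolding fin_support_def by (metis add.right_neutral fls_plus_nth max.boundedE nle_le)

lemma fin_support_sum: "(\<And>t. t \<in> S \<Longrightarrow> fin_support (f t)) \<Longrightarrow> fin_support (\<Sum>t\<in>S. f t)"
proof (induction S rule: infinite_finite_induct)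
  case (insert x F) then show ?case by (simp add: fin_support_add)
qed (simp_all add: fin_support_def)

lemma fin_support_const_mult:
  "fin_support (f::'a::{comm_monoid_add, mult_zero} fls) \<Longrightarrow> fin_support (fls_const c * f)"
  unfolding fin_support_def by (metis fls_mult_const_nth(1) mult_zero_right)

lemma fin_support_shift: "fin_support f \<Longrightarrow> fin_support (fls_shift m f)"
  unfolding fin_support_def by (metis diff_le_eq fls_shift_nth)

lemma poly_fls_add: "poly_fls f \<Longrightarrow> poly_fls g \<Longrightarrow> poly_fls (f + g)"
  unfolding poly_fls_iff by (auto intro: val_ge_add fin_support_add)

lemma poly_fls_uminus: "poly_fls f \<Longrightarrow> poly_fls (- f)"
  unfolding poly_fls_def by auto

lemma poly_fls_diff: "poly_fls f \<Longrightarrow> poly_fls g \<Longrightarrow> poly_fls (f - g)"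
  using poly_fls_add[OF _ poly_fls_uminus, of f g] by simp

lemma poly_fls_sum: "(\<And>t. t \<in> S \<Longrightarrow> poly_fls (f t)) \<Longrightarrow> poly_fls (\<Sum>t\<in>S. f t)"
  unfolding poly_fls_iff by (auto intro: val_ge_sum fin_support_sum)

lemma poly_fls_const_mult: "poly_fls f \<Longrightarrow> poly_fls (fls_const c * f)"
  unfolding poly_fls_iff by (auto intro: val_ge_const_mult fin_support_const_mult)

section \<open>Gauge coordinates in which the connection has constant residue\<close>

lemma less_6_cases: "(k::nat) < 6 \<longleftrightarrow> k = 0 \<or> k = 1 \<or> k = 2 \<or> k = 3 \<or> k = 4 \<or> k = 5"
  by auto

lemma sum_less_6: "(\<Sum>j<(6::nat). f j) = f 0 + f 1 + f 2 + f 3 + f 4 + (f 5 :: 'a::comm_monoid_add)"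
  by (simp add: eval_nat_numeral)

lemma sum_less_5: "(\<Sum>j<(5::nat). f j) = f 0 + f 1 + f 2 + f 3 + (f 4 :: 'a::comm_monoid_add)"
  by (simp add: eval_nat_numeral)

(* The gauge transformation u_k = sum_j Q_kj theta^j v_j, its constant inverse matrix, the
   residue matrix N of the transformed connection, and the eigenvalues lambda_k of N
   (N is lower triangular with diagonal lambda). *)
definition gauge_mat :: "nat \<Rightarrow> nat \<Rightarrow> complex" where
  "gauge_mat k j = (if k < 6 \<and> j < 6 then
     [[1,0,0,0,0,0],[1/2,1,0,0,0,0],[-1/4,0,1,0,0,0],[1/8,0,0,1,0,0],[-1/16,0,0,0,1,0],
      [1/64,1/16,1/8,1/4,1/2,1]] ! k ! j else 0)"

definition gauge_mat_inv :: "nat \<Rightarrow> nat \<Rightarrow> complex" where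
  "gauge_mat_inv j k = (if k < 6 \<and> j < 6 then
     [[1,0,0,0,0,0],[-1/2,1,0,0,0,0],[1/4,0,1,0,0,0],[-1/8,0,0,1,0,0],[1/16,0,0,0,1,0],
      [-1/64,-1/16,-1/8,-1/4,-1/2,1]] ! j ! k else 0)"

definition residue_mat :: "nat \<Rightarrow> nat \<Rightarrow> complex" where
  "residue_mat k l = (if k < 6 \<and> l < 6 then
     [[2,0,0,0,0,0],[0,0,0,0,0,0],[0,-1,0,0,0,0],[0,0,-1,0,0,0],[0,0,0,-1,0,0],
      [0,0,0,0,0,-2]] ! k ! l else 0)"

definition residue_eig :: "nat \<Rightarrow> rat" where
  "residue_eig k = [2,0,0,0,0,-2] ! k"

definition gauge :: "vec \<Rightarrow> nat \<Rightarrow> complex fls" where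
  "gauge v k = (\<Sum>j<6. fls_const (gauge_mat k j) * fls_X ^ j * v j)"

definition nabla_shift :: "rat \<Rightarrow> vec \<Rightarrow> vec" where
  "nabla_shift \<beta> v = (\<lambda>i. thetaNabla 6 Astar v i - fls_const (of_rat \<beta>) * v i)"

lemma elementary_iff:
  "elementary 6 Astar \<beta> s \<longleftrightarrow> s \<in> Man 6 \<and> (\<exists>N. (nabla_shift \<beta> ^^ N) s = (\<lambda>i. 0))"
proof -
  have "nabla_shift \<beta> = (\<lambda>v i. thetaNabla 6 Astar v i - fls_const (of_rat \<beta>) * v i)"
    by (rule ext) (simp add: nabla_shift_def)
  then show ?thesis unfolding elementary_def by simp
qed

lemma gauge_nth: "fls_nth (gauge v k) i = (\<Sum>j<6. gauge_mat k j * fls_nth (v j) (i - int j))"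
  unfolding gauge_def fls_nth_sum by (simp add: mult.assoc)

lemma gauge_zero [simp]: "gauge (\<lambda>i. 0) k = 0"
  unfolding gauge_def by simp

lemma gauge_diff: "gauge (\<lambda>j. v j - w j) k = gauge v k - gauge w k"
  unfolding gauge_def by (simp add: sum_subtractf algebra_simps)

lemma gauge_vsum: "gauge (vsum m c s) k = (\<Sum>t<m. c t * gauge (s t) k)"
  unfolding gauge_def vsum_def
  by (simp add: sum_distrib_left sum_distrib_right mult.assoc mult.left_commute sum.swap[of _ "{..<m}"])

lemma thetaNabla_nth:
  assumes "j < 6"
  shows "fls_nth (thetaNabla 6 Astar v j) i = of_int i * fls_nth (v j) i + dvals j * fls_nth (v j) i
          - (if j = 0 then 0 else fls_nth (v (j-1)) (i+1))"
  using assms unfolding less_6_cases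
  by (auto simp: thetaNabla_def Astar_def fls_nth_sum sum_less_6 eval_nat_numeral)

(* The defining identity Q (D - shift) - Q S = N Q of the gauge transformation, where D is the
   diagonal of the d_j, "shift" accounts for theta^j and S is the subdiagonal theta^-1 part. *)
lemma gauge_mat_identity:
  assumes "k < 6"
  shows "(\<Sum>j<6. gauge_mat k j * ((a - of_nat j + dvals j - b) * x j)) - (\<Sum>j<5. gauge_mat k (j+1) * x j)
       = (a - b) * (\<Sum>j<6. gauge_mat k j * x j) + (\<Sum>l<6. residue_mat k l * (\<Sum>j<6. gauge_mat l j * x j))"
  using assms unfolding less_6_cases
  by (auto simp: sum_less_6 sum_less_5 gauge_mat_def residue_mat_def dvals_def algebra_simps)

lemma gauge_nabla_shift_nth:
  assumes "k < 6"
  shows "fls_nth (gauge (nabla_shift \<beta> v) k) i = (of_int i - of_rat \<beta>) * fls_nth (gauge v k) i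
          + (\<Sum>l<6. residue_mat k l * fls_nth (gauge v l) i)"
proof -
  define x where "x j = fls_nth (v j) (i - int j)" for j
  have coeff: "fls_nth (nabla_shift \<beta> v j) (i - int j) =
     (of_int i - of_nat j + dvals j - of_rat \<beta>) * x j - (if j = 0 then 0 else x (j - 1))" if "j < 6" for j
  proof -
    have "j \<noteq> 0 \<Longrightarrow> i - int j + 1 = i - int (j - 1)" by simp
    then show ?thesis using that unfolding nabla_shift_def x_def
      by (simp add: thetaNabla_nth algebra_simps)
  qed
  have "fls_nth (gauge (nabla_shift \<beta> v) k) i
      = (\<Sum>j<6. gauge_mat k j * ((of_int i - of_nat j + dvals j - of_rat \<beta>) * x j))
        - (\<Sum>j<6. gauge_mat k j * (if j = 0 then 0 else x (j - 1)))"
    unfolding gauge_nth by (simp add: coeff right_diff_distrib sum_subtractf)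
  also have "(\<Sum>j<6. gauge_mat k j * (if j = 0 then 0 else x (j - 1))) = (\<Sum>j<5. gauge_mat k (j+1) * x j)"
    by (simp add: sum_less_6 sum_less_5 eval_nat_numeral)
  finally show ?thesis unfolding gauge_mat_identity[OF assms] gauge_nth x_def .
qed

(* The gauge transformation is injective on vectors of rank 6: it is triangular with unit
   diagonal up to powers of theta. *)
lemma gauge_eq_zero:
  assumes "\<forall>j\<ge>6. d j = 0" "\<forall>k<6. gauge d k = 0"
  shows "d = (\<lambda>j. 0)"
proof -
  have z: "(\<Sum>j<6. gauge_mat k j * fls_nth (d j) (i - int j)) = 0" if "k < 6" for k i
    using assms(2) that gauge_nth[of d k i] by simp
  have d0: "fls_nth (d 0) i = 0" for i using z[of 0 i] by (simp add: sum_less_6 gauge_mat_def)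
  have d1_4: "fls_nth (d 1) i = 0" "fls_nth (d 2) i = 0" "fls_nth (d 3) i = 0" "fls_nth (d 4) i = 0" for i
    using z[of 1 "i+1"] z[of 2 "i+2"] z[of 3 "i+3"] z[of 4 "i+4"] d0
    by (simp_all add: sum_less_6 gauge_mat_def)
  have d5: "fls_nth (d 5) i = 0" for i
    using z[of 5 "i+5"] d0 d1_4 by (simp add: sum_less_6 gauge_mat_def)
  show ?thesis
  proof
    fix j show "d j = 0"
    proof (cases "j < 6")
      case True
      then show ?thesis unfolding less_6_cases using d0 d1_4 d5 by (auto simp: fls_eq_iff)
    qed (use assms in auto)
  qed
qed

lemma gauge_inj:
  assumes "\<forall>j\<ge>6. v j = 0" "\<forall>j\<ge>6. w j = 0" "\<forall>k<6. gauge v k = gauge w k"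
  shows "v = w"
proof -
  have "(\<lambda>j. v j - w j) = (\<lambda>j. 0)"
    using assms by (intro gauge_eq_zero) (auto simp: gauge_diff)
  then show ?thesis by (simp add: fun_eq_iff)
qed

section \<open>Elementary sections and the V-filtration in gauge coordinates\<close>

lemma residue_eig_values:
  "residue_eig 0 = 2" "residue_eig 1 = 0" "residue_eig 2 = 0" "residue_eig 3 = 0"
  "residue_eig 4 = 0" "residue_eig 5 = -2"
  by (simp_all add: residue_eig_def)

lemma of_rat_shift_nonzero:
  "of_int i + (r::rat) \<noteq> \<beta> \<Longrightarrow> (of_int i - of_rat \<beta> + of_rat r :: complex) \<noteq> 0"
proof -
  assume "of_int i + r \<noteq> \<beta>"
  then have "of_int i - \<beta> + r \<noteq> 0" by auto
  moreover have "(of_int i - of_rat \<beta> + of_rat r :: complex) = of_rat (of_int i - \<beta> + r)"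
    by (simp add: of_rat_add of_rat_diff)
  ultimately show ?thesis by simp
qed

(* If (theta nabla - beta)^N s = 0 then the gauge coordinate u_k of s has no coefficient in
   degrees i with i + lambda_k \<noteq> beta: on such a coefficient the matrix (i - beta) + N is
   invertible (it is lower triangular with diagonal i - beta + lambda). *)
lemma nilpotent_gauge_coeff:
  "(nabla_shift \<beta> ^^ N) s = (\<lambda>i. 0) \<Longrightarrow> k < 6 \<Longrightarrow> of_int i + residue_eig k \<noteq> \<beta>
    \<Longrightarrow> fls_nth (gauge s k) i = 0"
proof (induction N arbitrary: s k)
  case (Suc N)
  define x where "x k = fls_nth (gauge s k) i" for k
  define y where "y k = fls_nth (gauge (nabla_shift \<beta> s) k) i" for k
  define c where "c = (of_int i - of_rat \<beta> :: complex)"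
  have "(nabla_shift \<beta> ^^ N) (nabla_shift \<beta> s) = (\<lambda>i. 0)"
    using Suc.prems(1) by (metis comp_apply funpow_Suc_right)
  then have IH: "k < 6 \<Longrightarrow> of_int i + residue_eig k \<noteq> \<beta> \<Longrightarrow> y k = 0" for k
    using Suc.IH unfolding y_def by blast
  have y: "y 0 = (c + 2) * x 0" "y 1 = c * x 1" "y 2 = c * x 2 - x 1" "y 3 = c * x 3 - x 2"
      "y 4 = c * x 4 - x 3" "y 5 = (c - 2) * x 5"
    unfolding y_def x_def c_def by (simp_all add: gauge_nabla_shift_nth sum_less_6 residue_mat_def algebra_simps)
  have c: "c + of_rat (residue_eig k) \<noteq> 0" if "of_int i + residue_eig k \<noteq> \<beta>" for k
    using of_rat_shift_nonzero[OF that] unfolding c_def .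
  consider "k = 0" | "k = 5" | "1 \<le> k \<and> k \<le> 4" using Suc.prems(2) by linarith
  then have "x k = 0"
  proof cases
    case 1
    then show ?thesis using c[OF Suc.prems(3)] IH[of 0] Suc.prems(3) y(1) by (simp add: residue_eig_values)
  next
    case 2
    then show ?thesis using c[OF Suc.prems(3)] IH[of 5] Suc.prems(3) y(6) by (simp add: residue_eig_values)
  next
    case 3
    then have eig: "residue_eig k = 0" by (auto simp: residue_eig_def eval_nat_numeral le_Suc_eq)
    then have "c \<noteq> 0" using c[OF Suc.prems(3)] by simp
    moreover have "y 1 = 0" "y 2 = 0" "y 3 = 0" "y 4 = 0"
      using IH[of 1] IH[of 2] IH[of 3] IH[of 4] Suc.prems(3) eig by (simp_all add: residue_eig_def)
    ultimately have "x 1 = 0" "x 2 = 0" "x 3 = 0" "x 4 = 0" using y by simp_all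
    then show ?thesis using 3 by (auto simp: eval_nat_numeral le_Suc_eq)
  qed
  then show ?case unfolding x_def .
qed simp

lemma elementary_gauge_val:
  assumes "elementary 6 Astar \<beta> s" "k < 6"
  shows "val_ge (gauge s k) (\<beta> - residue_eig k)"
proof -
  obtain N where "(nabla_shift \<beta> ^^ N) s = (\<lambda>i. 0)" using assms(1) elementary_iff by auto
  then show ?thesis unfolding val_ge_def using nilpotent_gauge_coeff assms(2) by force
qed

definition gauge_order :: "vec \<Rightarrow> rat \<Rightarrow> bool" where
  "gauge_order v \<alpha> \<longleftrightarrow> (\<forall>k<6. val_ge (gauge v k) (\<alpha> - residue_eig k))"

lemma Vfilt_gauge_order:
  assumes "v \<in> Vfilt 6 Astar \<alpha>" shows "gauge_order v \<alpha>"
proof -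
  obtain m c s where v: "v = vsum m c s"
    and cs: "\<forall>k<m. conv_ps (c k) \<and> (\<exists>\<beta>\<ge>\<alpha>. elementary 6 Astar \<beta> (s k))"
    using assms unfolding Vfilt_def by auto
  have "val_ge (c t * gauge (s t) k) (\<alpha> - residue_eig k)" if "t < m" "k < 6" for t k
  proof -
    obtain \<beta> where \<beta>: "\<beta> \<ge> \<alpha>" "elementary 6 Astar \<beta> (s t)" and "conv_ps (c t)"
      using cs \<open>t < m\<close> by auto
    then have "val_ge (c t * gauge (s t) k) (0 + (\<beta> - residue_eig k))"
      by (intro val_ge_mult elementary_gauge_val \<open>k < 6\<close>) (auto simp: conv_ps_iff)
    then show ?thesis by (rule val_ge_mono) (use \<beta> in simp)
  qed
  then show ?thesis unfolding gauge_order_def v gauge_vsum by (auto intro: val_ge_sum)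
qed

(* The section whose gauge coordinates are theta^n e_k (n an integer). *)
definition gauge_section :: "nat \<Rightarrow> int \<Rightarrow> vec" where
  "gauge_section k n = (\<lambda>j. if j < 6 then fls_const (gauge_mat_inv j k) * fls_shift (int j - n) 1 else 0)"

lemma gauge_section_nth:
  "fls_nth (gauge_section k n j) i = (if j < 6 \<and> i = n - int j then gauge_mat_inv j k else 0)"
  unfolding gauge_section_def by auto

lemma gauge_section_high: "j \<ge> 6 \<Longrightarrow> gauge_section k n j = 0"
  unfolding gauge_section_def by simp

lemma gauge_mat_inverse:
  "k < 6 \<Longrightarrow> k' < 6 \<Longrightarrow> (\<Sum>j<6. gauge_mat k' j * gauge_mat_inv j k) = (if k' = k then 1 else 0)"
  unfolding less_6_cases by (auto simp: sum_less_6 gauge_mat_def gauge_mat_inv_def)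

lemma gauge_gauge_section:
  assumes "k < 6" "k' < 6"
  shows "gauge (gauge_section k n) k' = (if k' = k then fls_shift (- n) 1 else 0)"
proof (rule fls_eqI)
  fix i
  have "fls_nth (gauge (gauge_section k n) k') i
      = (if i = n then (\<Sum>j<6. gauge_mat k' j * gauge_mat_inv j k) else 0)"
    unfolding gauge_nth gauge_section_nth by (auto intro: sum.cong)
  also have "\<dots> = fls_nth (if k' = k then fls_shift (- n) 1 else 0) i"
    using gauge_mat_inverse[OF assms] by auto
  finally show "fls_nth (gauge (gauge_section k n) k') i = fls_nth (if k' = k then fls_shift (- n) 1 else 0) i" .
qed

lemma gauge_vsum_gauge_section:
  assumes "k < 6"
  shows "gauge (vsum 6 c (\<lambda>t. gauge_section t (n t))) k = c k * fls_shift (- n k) 1"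
proof -
  have "gauge (vsum 6 c (\<lambda>t. gauge_section t (n t))) k
      = (\<Sum>t<6. if t = k then c k * fls_shift (- n k) 1 else 0)"
    unfolding gauge_vsum using assms by (intro sum.cong) (auto simp: gauge_gauge_section)
  also have "\<dots> = c k * fls_shift (- n k) 1" using assms by simp
  finally show ?thesis .
qed

lemma vsum_gauge_section_high: "j \<ge> 6 \<Longrightarrow> vsum m c (\<lambda>t. gauge_section t (n t)) j = 0"
  unfolding vsum_def by (simp add: gauge_section_high)

lemma gauge_section_Man: "gauge_section k n \<in> Man 6"
  unfolding Man_def
proof safe
  fix j show "conv_fls (gauge_section k n j)"
    by (rule fin_support_conv) (unfold fin_support_def gauge_section_nth, rule exI[of _ "n + 1"], auto)
qed (simp add: gauge_section_high)

lemma nabla_shift_high: "\<forall>j\<ge>6. w j = 0 \<Longrightarrow> \<forall>j\<ge>6. (nabla_shift \<beta> ^^ N) w j = 0"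
  by (induction N) (auto simp: nabla_shift_def thetaNabla_def)

(* theta^n e_k is elementary of eigenvalue n + lambda_k; since the Jordan blocks of N have
   size at most 4, (theta nabla - beta)^4 annihilates it. *)
lemma gauge_section_elementary:
  assumes k: "k < 6"
  shows "elementary 6 Astar (of_int n + residue_eig k) (gauge_section k n)"
proof -
  define \<beta> where "\<beta> = of_int n + residue_eig k"
  define z where "z N l = fls_nth (gauge ((nabla_shift \<beta> ^^ N) (gauge_section k n)) l) n" for N l
  (* z N l: the degree-n coefficient of the l-th gauge coordinate of (theta nabla - beta)^N;
     one application of theta nabla - beta acts on it by N - lambda_k. *)
  have step: "z (Suc N) l = (of_rat (residue_eig l) - of_rat (residue_eig k)) * z N l
      - (if 2 \<le> l \<and> l \<le> 4 then z N (l - 1) else 0)" if "l < 6" for N l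
    using that unfolding z_def funpow.simps comp_apply less_6_cases
    by (auto simp: gauge_nabla_shift_nth sum_less_6 residue_mat_def residue_eig_def \<beta>_def of_rat_add algebra_simps)
  have start: "z 0 l = (if l = k then 1 else 0)" if "l < 6" for l
    unfolding z_def using gauge_gauge_section[OF k that] by auto
  have at_n: "z 4 l = 0" if "l < 6" for l
    using k that unfolding less_6_cases
    by (auto simp: step start residue_eig_def eval_nat_numeral)
  have off_n: "fls_nth (gauge ((nabla_shift \<beta> ^^ N) (gauge_section k n)) l) i = 0"
    if "i \<noteq> n" "l < 6" for N l i
    using that(2)
  proof (induction N arbitrary: l)
    case 0 then show ?case using gauge_gauge_section[OF k] that(1) by auto
  next
    case (Suc N) then show ?case by (simp add: gauge_nabla_shift_nth Suc.IH)
  qed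
  have "(nabla_shift \<beta> ^^ 4) (gauge_section k n) = (\<lambda>i. 0)"
  proof (rule gauge_inj)
    show "\<forall>j\<ge>6. (nabla_shift \<beta> ^^ 4) (gauge_section k n) j = 0"
      by (rule nabla_shift_high) (simp add: gauge_section_high)
    show "\<forall>l<6. gauge ((nabla_shift \<beta> ^^ 4) (gauge_section k n)) l = gauge (\<lambda>i. 0) l"
    proof (intro allI impI fls_eqI)
      fix l i assume "l < (6::nat)"
      then show "fls_nth (gauge ((nabla_shift \<beta> ^^ 4) (gauge_section k n)) l) i = fls_nth (gauge (\<lambda>i. 0) l) i"
        using at_n off_n unfolding z_def by (cases "i = n") auto
    qed
  qed simp
  then show ?thesis unfolding elementary_iff \<beta>_def using gauge_section_Man by blast
qed

lemma gauge_conv: "v \<in> Man 6 \<Longrightarrow> conv_fls (gauge v k)"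
  unfolding gauge_def Man_def by (auto intro!: conv_sum conv_const_mult conv_X_power_mult simp: mult.assoc)

(* Conversely, a section satisfying the gauge order condition for alpha is a C{theta}-combination
   of sections theta^(n_k) e_k, which are elementary of eigenvalue n_k + lambda_k >= alpha. *)
lemma gauge_order_Vfilt:
  assumes v: "v \<in> Man 6" and ord: "gauge_order v \<alpha>"
  shows "v \<in> Vfilt 6 Astar \<alpha>"
proof -
  define n where "n k = \<lceil>\<alpha> - residue_eig k\<rceil>" for k
  define c where "c k = fls_shift (n k) (gauge v k)" for k
  have conv: "conv_ps (c k)" if k: "k < 6" for k
    unfolding conv_ps_iff
  proof
    show "conv_fls (c k)" unfolding c_def using gauge_conv[OF v] by (rule conv_shift)
    show "val_ge (c k) 0" unfolding val_ge_def
    proof (intro allI impI)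
      fix i :: int assume i: "of_int i < (0::rat)"
      then have "rat_of_int i \<le> -1" by simp
      then have "of_int (i + n k) < \<alpha> - residue_eig k"
        unfolding n_def of_int_add using ceiling_correct[of "\<alpha> - residue_eig k"] by linarith
      then show "fls_nth (c k) i = 0" unfolding c_def using ord k unfolding gauge_order_def val_ge_def by simp
    qed
  qed
  have elem: "\<exists>\<beta>\<ge>\<alpha>. elementary 6 Astar \<beta> (gauge_section k (n k))" if "k < 6" for k
  proof (intro exI conjI)
    show "elementary 6 Astar (of_int (n k) + residue_eig k) (gauge_section k (n k))"
      by (rule gauge_section_elementary[OF that])
    show "\<alpha> \<le> of_int (n k) + residue_eig k" unfolding n_def by linarith
  qed
  have "v = vsum 6 c (\<lambda>t. gauge_section t (n t))"
  proof (rule gauge_inj)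
    show "\<forall>j\<ge>6. v j = 0" using v unfolding Man_def by auto
    show "\<forall>j\<ge>6. vsum 6 c (\<lambda>t. gauge_section t (n t)) j = 0" by (simp add: vsum_gauge_section_high)
    show "\<forall>k<6. gauge v k = gauge (vsum 6 c (\<lambda>t. gauge_section t (n t))) k"
      by (auto simp: gauge_vsum_gauge_section c_def fls_shifted_times_simps)
  qed
  then show ?thesis unfolding Vfilt_def using conv elem by blast
qed

lemma Vfilt_iff_gauge_order: "v \<in> Man 6 \<Longrightarrow> v \<in> Vfilt 6 Astar \<alpha> \<longleftrightarrow> gauge_order v \<alpha>"
  using Vfilt_gauge_order gauge_order_Vfilt by blast

section \<open>Regular singularity\<close>

(* The lattice spanned by the sections e_k (gauge coordinates) is stable under theta nabla,
   which acts on the coefficient vector c as theta d/dtheta + N. *)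
lemma gauge_lattice_stable:
  assumes c: "\<forall>k<6. conv_ps (c k)"
  shows "\<exists>c'. (\<forall>k<6. conv_ps (c' k)) \<and>
    thetaNabla 6 Astar (vsum 6 c (\<lambda>t. gauge_section t 0)) = vsum 6 c' (\<lambda>t. gauge_section t 0)"
proof (intro exI conjI)
  define c' where "c' k = fls_X * fls_deriv (c k) + (\<Sum>l<6. fls_const (residue_mat k l) * c l)" for k
  show "\<forall>k<6. conv_ps (c' k)" unfolding c'_def using c
    by (auto intro!: conv_ps_add conv_ps_euler_deriv conv_ps_sum conv_ps_const_mult)
  have gauge_c: "gauge (vsum 6 c (\<lambda>t. gauge_section t 0)) k = c k" if "k < 6" for c k
    using gauge_vsum_gauge_section[OF that, of c "\<lambda>_. 0"] by simp
  have nabla_as_shift: "thetaNabla 6 Astar v = nabla_shift 0 v" for v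
    by (rule ext) (simp add: nabla_shift_def)
  show "thetaNabla 6 Astar (vsum 6 c (\<lambda>t. gauge_section t 0)) = vsum 6 c' (\<lambda>t. gauge_section t 0)"
  proof (rule gauge_inj)
    show "\<forall>j\<ge>6. thetaNabla 6 Astar (vsum 6 c (\<lambda>t. gauge_section t 0)) j = 0"
      by (simp add: thetaNabla_def)
    show "\<forall>j\<ge>6. vsum 6 c' (\<lambda>t. gauge_section t 0) j = 0"
      using vsum_gauge_section_high[of _ 6 c' "\<lambda>_. 0"] by simp
    show "\<forall>k<6. gauge (thetaNabla 6 Astar (vsum 6 c (\<lambda>t. gauge_section t 0))) k
              = gauge (vsum 6 c' (\<lambda>t. gauge_section t 0)) k"
    proof (intro allI impI fls_eqI)
      fix k i assume k: "k < (6::nat)"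
      have "fls_nth (gauge (thetaNabla 6 Astar (vsum 6 c (\<lambda>t. gauge_section t 0))) k) i
          = of_int i * fls_nth (c k) i + (\<Sum>l<6. residue_mat k l * fls_nth (c l) i)"
        using gauge_nabla_shift_nth[OF k, of 0] by (simp add: nabla_as_shift gauge_c k)
      also have "\<dots> = fls_nth (gauge (vsum 6 c' (\<lambda>t. gauge_section t 0)) k) i"
        unfolding gauge_c[OF k] c'_def by (simp add: fls_nth_sum)
      finally show "fls_nth (gauge (thetaNabla 6 Astar (vsum 6 c (\<lambda>t. gauge_section t 0))) k) i
          = fls_nth (gauge (vsum 6 c' (\<lambda>t. gauge_section t 0)) k) i" .
    qed
  qed
qed

lemma gauge_lattice_exhaustive:
  assumes v: "v \<in> Man 6"
  shows "\<exists>p c. (\<forall>k<6. conv_ps (c k)) \<and> smul (fls_X ^ p) v = vsum 6 c (\<lambda>t. gauge_section t 0)"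
proof -
  define p where "p = (\<Sum>j<6. nat (- fls_subdegree (v j)))"
  define w where "w = smul (fls_X ^ p) v"
  have p: "- fls_subdegree (v j) \<le> int p" if "j < 6" for j
  proof -
    have "nat (- fls_subdegree (v j)) \<le> p" unfolding p_def by (rule member_le_sum) (use that in auto)
    then show ?thesis by linarith
  qed
  have w_conv: "conv_ps (w j)" if "j < 6" for j
    unfolding conv_ps_iff
  proof
    show "conv_fls (w j)" unfolding w_def smul_def using v unfolding Man_def by (auto intro: conv_X_power_mult)
    show "val_ge (w j) 0" unfolding val_ge_def w_def smul_def
    proof (intro allI impI)
      fix i :: int assume "of_int i < (0::rat)"
      then have "i - int p < fls_subdegree (v j)" using p[OF that] by linarith
      then show "fls_nth (fls_X ^ p * v j) i = 0" by simp
    qed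
  qed
  have "w = vsum 6 (gauge w) (\<lambda>t. gauge_section t 0)"
  proof (rule gauge_inj)
    show "\<forall>j\<ge>6. w j = 0" using v unfolding w_def smul_def Man_def by auto
    show "\<forall>j\<ge>6. vsum 6 (gauge w) (\<lambda>t. gauge_section t 0) j = 0"
      using vsum_gauge_section_high[of _ 6 "gauge w" "\<lambda>_. 0"] by simp
    show "\<forall>k<6. gauge w k = gauge (vsum 6 (gauge w) (\<lambda>t. gauge_section t 0)) k"
      using gauge_vsum_gauge_section[of _ "gauge w" "\<lambda>_. 0"] by simp
  qed
  moreover have "conv_ps (gauge w k)" for k unfolding gauge_def
    by (intro conv_ps_sum) (simp add: mult.assoc conv_ps_const_mult conv_ps_X_power_mult w_conv)
  ultimately show ?thesis unfolding w_def by blast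
qed

theorem regular_singular_Astar: "regular_singular 6 Astar"
  unfolding regular_singular_def Let_def
proof (intro exI[of _ 6] exI[of _ "\<lambda>t. gauge_section t 0"] conjI)
  show "\<forall>k<6. gauge_section k 0 \<in> Man 6" by (simp add: gauge_section_Man)
  show "\<forall>v\<in>{vsum 6 c (\<lambda>t. gauge_section t 0) |c. \<forall>k<6. conv_ps (c k)}.
      thetaNabla 6 Astar v \<in> {vsum 6 c (\<lambda>t. gauge_section t 0) |c. \<forall>k<6. conv_ps (c k)}"
    using gauge_lattice_stable by blast
  show "\<forall>v\<in>Man 6. \<exists>p. smul (fls_X ^ p) v \<in> {vsum 6 c (\<lambda>t. gauge_section t 0) |c. \<forall>k<6. conv_ps (c k)}"
    using gauge_lattice_exhaustive by blast
qed

section \<open>An adapted basis of E\<close>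

abbreviation X :: "complex fls" where "X \<equiv> fls_X"

(* The polynomial matrix of adapted coordinates p_l = sum_j P_lj v_j; it is unimodular over
   C[theta], with inverse given by the basis sigma_l of E below (v = sum_l p_l sigma_l).
   The exponent alpha_l is the V-order of sigma_l. *)
definition adapted_mat :: "nat \<Rightarrow> nat \<Rightarrow> complex fls" where
  "adapted_mat l j = (if l < 6 \<and> j < 6 then
     [[1, 4*X, 8*X^2, 16*X^3, 32*X^4, 64*X^5],
      [0, 1, 0, 0, 0, -32*X^4],
      [0, 0, 1, 0, 0, 16*X^3],
      [0, 0, 0, 1, 0, -8*X^2],
      [0, 0, 0, 0, 1, 4*X],
      [0, 0, 0, 0, 0, 1]] ! l ! j else 0)"

definition adapted :: "vec \<Rightarrow> nat \<Rightarrow> complex fls" where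
  "adapted v l = (\<Sum>j<6. adapted_mat l j * v j)"

definition adapted_basis :: "nat \<Rightarrow> vec" where
  "adapted_basis l j = (if l < 6 \<and> j < 6 then
     [[1, 0, 0, 0, 0, 0],
      [-4*X, 1, 0, 0, 0, 0],
      [-8*X^2, 0, 1, 0, 0, 0],
      [-16*X^3, 0, 0, 1, 0, 0],
      [-32*X^4, 0, 0, 0, 1, 0],
      [-64*X^5, 32*X^4, -16*X^3, 8*X^2, -4*X, 1]] ! l ! j else 0)"

definition spec_exp :: "nat \<Rightarrow> int" where
  "spec_exp l = [-2, 1, 2, 3, 4, 7] ! l"

lemma spec_exp_inj: "l < 6 \<Longrightarrow> l' < 6 \<Longrightarrow> spec_exp l = spec_exp l' \<Longrightarrow> l = l'"
  unfolding less_6_cases by (auto simp: spec_exp_def)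

lemma adapted_explicit:
  "adapted v 0 = v 0 + 4*X* v 1 + 8*X^2* v 2 + 16*X^3* v 3 + 32*X^4* v 4 + 64*X^5* v 5"
  "adapted v 1 = v 1 - 32*X^4* v 5" "adapted v 2 = v 2 + 16*X^3* v 5" "adapted v 3 = v 3 - 8*X^2* v 5"
  "adapted v 4 = v 4 + 4*X* v 5" "adapted v 5 = v 5"
  by (simp_all add: adapted_def adapted_mat_def sum_less_6)

lemma gauge_explicit:
  "gauge v 0 = v 0"
  "2 * gauge v 1 = v 0 + 2*X* v 1"
  "4 * gauge v 2 = - v 0 + 4*X^2* v 2"
  "8 * gauge v 3 = v 0 + 8*X^3* v 3"
  "16 * gauge v 4 = - v 0 + 16*X^4* v 4"
  "64 * gauge v 5 = v 0 + 4*X* v 1 + 8*X^2* v 2 + 16*X^3* v 3 + 32*X^4* v 4 + 64*X^5* v 5"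
proof -
  have const: "numeral n * (fls_const c * f) = fls_const (numeral n * c) * f" for n c and f :: "complex fls"
    by (simp only: fls_const_numeral[symmetric] fls_const_mult_const mult.assoc[symmetric])
  show "gauge v 0 = v 0"
    "2 * gauge v 1 = v 0 + 2*X* v 1"
    "4 * gauge v 2 = - v 0 + 4*X^2* v 2"
    "8 * gauge v 3 = v 0 + 8*X^3* v 3"
    "16 * gauge v 4 = - v 0 + 16*X^4* v 4"
    "64 * gauge v 5 = v 0 + 4*X* v 1 + 8*X^2* v 2 + 16*X^3* v 3 + 32*X^4* v 4 + 64*X^5* v 5"
    by (simp_all add: gauge_def sum_less_6 gauge_mat_def mult.assoc const distrib_left)
qed

(* The exponents are exactly large enough to
   exchange the two families of order conditions. *)
lemma gauge_in_adapted:
  "gauge v 0 = adapted v 0 - 4*X*adapted v 1 - 8*X^2*adapted v 2 - 16*X^3*adapted v 3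
     - 32*X^4*adapted v 4 - 64*X^5*adapted v 5"
  "2 * gauge v 1 = adapted v 0 - 2*X*adapted v 1 - 8*X^2*adapted v 2 - 16*X^3*adapted v 3
     - 32*X^4*adapted v 4"
  "4 * gauge v 2 = - adapted v 0 + 4*X*adapted v 1 + 12*X^2*adapted v 2 + 16*X^3*adapted v 3
     + 32*X^4*adapted v 4"
  "8 * gauge v 3 = adapted v 0 - 4*X*adapted v 1 - 8*X^2*adapted v 2 - 8*X^3*adapted v 3
     - 32*X^4*adapted v 4"
  "16 * gauge v 4 = - adapted v 0 + 4*X*adapted v 1 + 8*X^2*adapted v 2 + 16*X^3*adapted v 3
     + 48*X^4*adapted v 4"
  "64 * gauge v 5 = adapted v 0"
  unfolding gauge_explicit adapted_explicit by (simp_all add: algebra_simps flip: power_Suc power_add)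

lemma adapted_in_gauge:
  "adapted v 0 = 64 * gauge v 5"
  "2*X*adapted v 1 = 3*(2 * gauge v 1) - (64 * gauge v 5) + 2*(4 * gauge v 2) + 2*(8 * gauge v 3)
     + 2*(16 * gauge v 4)"
  "4*X^2*adapted v 2 = -2*(2 * gauge v 1) + (64 * gauge v 5) - (4 * gauge v 2) - 2*(8 * gauge v 3)
     - 2*(16 * gauge v 4)"
  "8*X^3*adapted v 3 = 2*(2 * gauge v 1) - (64 * gauge v 5) + 2*(4 * gauge v 2) + 3*(8 * gauge v 3)
     + 2*(16 * gauge v 4)"
  "16*X^4*adapted v 4 = -2*(2 * gauge v 1) + (64 * gauge v 5) - 2*(4 * gauge v 2) - 2*(8 * gauge v 3)
     - (16 * gauge v 4)"
  "64*X^5*adapted v 5 = adapted v 0 - gauge v 0 - 4*X*adapted v 1 - 8*X^2*adapted v 2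
     - 16*X^3*adapted v 3 - 32*X^4*adapted v 4"
  unfolding gauge_explicit adapted_explicit by (simp_all add: algebra_simps flip: power_Suc power_add)

definition adapted_order :: "vec \<Rightarrow> rat \<Rightarrow> bool" where
  "adapted_order v \<alpha> \<longleftrightarrow> (\<forall>l<6. val_ge (adapted v l) (\<alpha> - of_int (spec_exp l)))"

lemma gauge_order_imp_adapted_order:
  assumes "gauge_order v \<alpha>" shows "adapted_order v \<alpha>"
proof -
  have g: "val_ge (gauge v k) (\<alpha> - residue_eig k)" if "k < 6" for k
    using assms that unfolding gauge_order_def by blast
  then have g0: "val_ge (gauge v 0) (\<alpha> - 2)" and g5: "val_ge (gauge v 5) (\<alpha> + 2)"
    using g[of 0] g[of 5] by (simp_all add: residue_eig_def)
  have h: "val_ge (2 * gauge v 1) \<alpha>" "val_ge (4 * gauge v 2) \<alpha>" "val_ge (8 * gauge v 3) \<alpha>"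
     "val_ge (16 * gauge v 4) \<alpha>" "val_ge (64 * gauge v 5) \<alpha>"
    using g[of 1] g[of 2] g[of 3] g[of 4] val_ge_mono[OF g5]
    by (auto intro!: val_ge_numeral_mult simp: residue_eig_def)
  have p0: "val_ge (adapted v 0) (\<alpha> + 2)"
    unfolding adapted_in_gauge(1) using g5 by (rule val_ge_numeral_mult)
  have "val_ge (2*X*adapted v 1) \<alpha>" "val_ge (4*X^2*adapted v 2) \<alpha>"
       "val_ge (8*X^3*adapted v 3) \<alpha>" "val_ge (16*X^4*adapted v 4) \<alpha>"
    unfolding adapted_in_gauge
    by (intro val_ge_add val_ge_diff; (rule h | (rule val_ge_numeral_mult val_ge_neg_numeral_mult, rule h)))+
  then have p1_4: "val_ge (adapted v 1) (\<alpha> - 1)" "val_ge (adapted v 2) (\<alpha> - 2)"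
       "val_ge (adapted v 3) (\<alpha> - 3)" "val_ge (adapted v 4) (\<alpha> - 4)"
    using val_ge_monomial_cancel[where n = 1] val_ge_monomial_cancel[where n = 2]
      val_ge_monomial_cancel[where n = 3] val_ge_monomial_cancel[where n = 4] by fastforce+
  have "val_ge (64*X^5*adapted v 5) (\<alpha> - 2)" unfolding adapted_in_gauge(6)
    by (intro val_ge_add val_ge_diff val_ge_mono[OF p0] g0 val_ge_monomial_mult[where n = 1, simplified]
        val_ge_monomial_mult[OF p1_4(2)] val_ge_monomial_mult[OF p1_4(3)] val_ge_monomial_mult[OF p1_4(4)])
      (use p1_4(1) in auto)
  then have "val_ge (adapted v 5) (\<alpha> - 7)" using val_ge_monomial_cancel[where n = 5] by fastforce
  then show ?thesis unfolding adapted_order_def less_6_cases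
    using p0 p1_4 by (auto simp: spec_exp_def)
qed

lemma adapted_order_imp_gauge_order:
  assumes "adapted_order v \<alpha>" shows "gauge_order v \<alpha>"
proof -
  have p: "val_ge (adapted v l) (\<alpha> - of_int (spec_exp l))" if "l < 6" for l
    using assms that unfolding adapted_order_def by blast
  have p0: "val_ge (adapted v 0) (\<alpha> + 2)" and p1: "val_ge (adapted v 1) (\<alpha> - 1)"
    and p2: "val_ge (adapted v 2) (\<alpha> - 2)" and p3: "val_ge (adapted v 3) (\<alpha> - 3)"
    and p4: "val_ge (adapted v 4) (\<alpha> - 4)" and p5: "val_ge (adapted v 5) (\<alpha> - 7)"
    using p[of 0] p[of 1] p[of 2] p[of 3] p[of 4] p[of 5] by (simp_all add: spec_exp_def)
  note monomials = val_ge_mono[OF p0] val_ge_monomial_mult[where n = 1, simplified, OF p1]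
    val_ge_monomial_mult[OF p2]
    val_ge_monomial_mult[OF p3] val_ge_monomial_mult[OF p4] val_ge_monomial_mult[OF p5]
  have g0: "val_ge (gauge v 0) (\<alpha> - 2)" unfolding gauge_in_adapted(1)
    by (intro val_ge_add val_ge_diff monomials) auto
  have "val_ge (2 * gauge v 1) \<alpha>" "val_ge (4 * gauge v 2) \<alpha>" "val_ge (8 * gauge v 3) \<alpha>"
    "val_ge (16 * gauge v 4) \<alpha>"
    unfolding gauge_in_adapted by (intro val_ge_add val_ge_diff val_ge_uminus monomials; simp)+
  then have g1_4: "val_ge (gauge v 1) \<alpha>" "val_ge (gauge v 2) \<alpha>" "val_ge (gauge v 3) \<alpha>"
    "val_ge (gauge v 4) \<alpha>" by (auto dest: val_ge_numeral_cancel)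
  have g5: "val_ge (gauge v 5) (\<alpha> + 2)"
    using p0 unfolding gauge_in_adapted(6)[symmetric] by (rule val_ge_numeral_cancel)
  show ?thesis unfolding gauge_order_def less_6_cases
    using g0 g1_4 g5 by (auto simp: residue_eig_def)
qed

lemma Emod_subset_Man: "Emod n \<subseteq> Man n"
  unfolding Emod_def Man_def by (auto simp: poly_fls_iff intro: fin_support_conv)

lemma Vfilt_iff_adapted_order: "v \<in> Emod 6 \<Longrightarrow> v \<in> Vfilt 6 Astar \<alpha> \<longleftrightarrow> adapted_order v \<alpha>"
  using Vfilt_iff_gauge_order Emod_subset_Man gauge_order_imp_adapted_order
    adapted_order_imp_gauge_order by blast

lemma adapted_adapted_basis:
  "l < 6 \<Longrightarrow> l' < 6 \<Longrightarrow> adapted (adapted_basis l') l = (if l = l' then 1 else 0)"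
  unfolding less_6_cases
  by (elim disjE) (simp_all add: adapted_explicit adapted_explicit(2)[unfolded One_nat_def]
      adapted_basis_def algebra_simps flip: power_Suc power_add)

lemma adapted_reconstruct:
  assumes "\<forall>j\<ge>6. v j = 0" shows "v j = (\<Sum>l<6. adapted v l * adapted_basis l j)"
proof (cases "j < 6")
  case True
  then show ?thesis unfolding less_6_cases
    by (elim disjE) (simp_all add: sum_less_6 adapted_explicit adapted_explicit(2)[unfolded One_nat_def]
        adapted_basis_def algebra_simps flip: power_Suc power_add)
qed (use assms in \<open>simp add: adapted_basis_def\<close>)

lemma adapted_linear: "adapted (\<lambda>j. \<Sum>t\<in>T. f t * s t j) l = (\<Sum>t\<in>T. f t * adapted (s t) l)"
  unfolding adapted_def
  by (simp add: sum_distrib_left mult.left_commute sum.swap[of _ "{..<6}"])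

lemma adapted_diff: "adapted (\<lambda>j. a j - b j) l = adapted a l - adapted b l"
  unfolding adapted_def by (simp add: right_diff_distrib sum_subtractf)

lemma adapted_add: "adapted (\<lambda>j. a j + b j) l = adapted a l + adapted b l"
  unfolding adapted_def by (simp add: distrib_left sum.distrib)

lemma adapted_smul: "adapted (smul f v) l = f * adapted v l"
  unfolding adapted_def smul_def by (simp add: sum_distrib_left mult.left_commute)

lemma adapted_combination:
  assumes "l < 6" shows "adapted (\<lambda>j. \<Sum>t<6. f t * adapted_basis t j) l = f l"
proof -
  have "adapted (\<lambda>j. \<Sum>t<6. f t * adapted_basis t j) l = (\<Sum>t<6. if t = l then f l else 0)"
    unfolding adapted_linear using assms by (intro sum.cong) (auto simp: adapted_adapted_basis)
  then show ?thesis using assms by simp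
qed

lemma poly_fls_monomial:
  "poly_fls (numeral c * X ^ n)" "poly_fls (numeral c * X)" "poly_fls (1::complex fls)"
  "poly_fls (0::complex fls)"
  unfolding poly_fls_def by (auto intro: exI[of _ "int n + 1"] exI[of _ 2])

lemma adapted_basis_poly: "poly_fls (adapted_basis l j)"
proof (cases "l < 6 \<and> j < 6")
  case True
  then show ?thesis unfolding less_6_cases
    by (elim conjE disjE) (simp_all add: adapted_basis_def poly_fls_monomial poly_fls_uminus)
qed (auto simp: adapted_basis_def poly_fls_def)

lemma adapted_mat_poly: "poly_fls (adapted_mat l j)"
proof (cases "l < 6 \<and> j < 6")
  case True
  then show ?thesis unfolding less_6_cases
    by (elim conjE disjE) (simp_all add: adapted_mat_def poly_fls_monomial poly_fls_uminus)
qed (auto simp: adapted_mat_def poly_fls_def)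

lemma adapted_basis_high: "j \<ge> 6 \<Longrightarrow> adapted_basis l j = 0"
  unfolding adapted_basis_def by simp

lemma adapted_basis_Emod: "adapted_basis l \<in> Emod 6"
  unfolding Emod_def by (auto simp: adapted_basis_poly adapted_basis_high)

lemma adapted_Emod_val: "v \<in> Emod 6 \<Longrightarrow> val_ge (adapted v l) 0"
  unfolding adapted_def Emod_def
  using val_ge_mult[of "adapted_mat l _" 0 "v _" 0] adapted_mat_poly by (auto intro!: val_ge_sum simp: poly_fls_iff)

lemma adapted_basis_Vfilt: "l < 6 \<Longrightarrow> adapted_basis l \<in> Vfilt 6 Astar (of_int (spec_exp l))"
  using adapted_adapted_basis[of _ l]
  by (auto simp: Vfilt_iff_adapted_order[OF adapted_basis_Emod] adapted_order_def val_ge_def)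

lemma constant_combination_Vfilt:
  assumes "\<forall>l<6. c l \<noteq> 0 \<longrightarrow> \<beta> \<le> of_int (spec_exp l)"
  shows "(\<lambda>j. \<Sum>l<6. fls_const (c l) * adapted_basis l j) \<in> Vfilt 6 Astar \<beta> \<inter> Emod 6"
proof -
  have E: "(\<lambda>j. \<Sum>l<6. fls_const (c l) * adapted_basis l j) \<in> Emod 6"
    unfolding Emod_def by (auto intro!: poly_fls_sum poly_fls_const_mult adapted_basis_poly
        simp: adapted_basis_high)
  have "adapted_order (\<lambda>j. \<Sum>l<6. fls_const (c l) * adapted_basis l j) \<beta>"
    unfolding adapted_order_def using assms adapted_combination[of _ "\<lambda>l. fls_const (c l)"]
    by (auto simp: val_ge_def)
  then show ?thesis using E Vfilt_iff_adapted_order by blast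
qed

lemma adapted_val_one_thetaE:
  assumes v: "v \<in> Emod 6" and val: "\<forall>l<6. val_ge (adapted v l) 1"
  shows "v \<in> thetaE 6"
proof -
  have hi: "\<forall>j\<ge>6. v j = 0" using v unfolding Emod_def by auto
  have "val_ge (v j) 1" for j
    unfolding adapted_reconstruct[OF hi, of j]
    using val val_ge_mult[of "adapted v _" 1 "adapted_basis _ j" 0] adapted_basis_poly
    by (auto intro!: val_ge_sum simp: poly_fls_iff)
  then have "poly_fls (fls_shift 1 (v j))" for j
    using v unfolding Emod_def poly_fls_iff by (auto intro: fin_support_shift simp: val_ge_def)
  then have "(\<lambda>j. fls_shift 1 (v j)) \<in> Emod 6" using hi unfolding Emod_def by auto
  moreover have "v = smul fls_X (\<lambda>j. fls_shift 1 (v j))"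
    unfolding smul_def by (auto intro!: fls_eqI)
  ultimately show ?thesis unfolding thetaE_def by blast
qed

section \<open>The spectrum\<close>

definition graded_denom :: "rat \<Rightarrow> vec set" where
  "graded_denom \<alpha> = {(\<lambda>i. x i + y i) | x y.
     x \<in> Vfilt 6 Astar \<alpha> \<inter> thetaE 6 \<and> y \<in> Vgt 6 Astar \<alpha> \<inter> Emod 6}"

definition adapted_const :: "vec \<Rightarrow> nat \<Rightarrow> complex" where
  "adapted_const x l = fls_nth (adapted x l) 0"

lemma adapted_const_vanish:
  assumes "x \<in> Vfilt 6 Astar \<alpha> \<inter> Emod 6" "l < 6" "of_int (spec_exp l) < \<alpha>"
  shows "adapted_const x l = 0"
  using assms Vfilt_iff_adapted_order unfolding adapted_order_def adapted_const_def val_ge_def by force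

(* Modulo V^alpha cap theta E + V^(>alpha) cap E, every x in V^alpha cap E is congruent to
   the combination of the sigma_l with alpha_l = alpha, with the constant terms of its
   adapted coordinates as coefficients: subtracting all constant terms lands in theta E,
   and the constant terms with alpha_l \<noteq> alpha give an element of V^(>alpha). *)
lemma graded_span:
  assumes x: "x \<in> Vfilt 6 Astar \<alpha> \<inter> Emod 6"
  shows "(\<lambda>j. x j - (\<Sum>l<6. fls_const (if of_int (spec_exp l) = \<alpha> then adapted_const x l else 0)
            * adapted_basis l j)) \<in> graded_denom \<alpha>"
proof -
  define c where "c = adapted_const x"
  define x1 where "x1 = (\<lambda>j. x j - (\<Sum>l<6. fls_const (c l) * adapted_basis l j))"
  define d where "d l = (if of_int (spec_exp l) = \<alpha> then 0 else c l)" for l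
  define y1 where "y1 = (\<lambda>j. \<Sum>l<6. fls_const (d l) * adapted_basis l j)"
  have "(\<lambda>j. x j - (\<Sum>l<6. fls_const (if of_int (spec_exp l) = \<alpha> then c l else 0) * adapted_basis l j))
      = (\<lambda>j. x1 j + y1 j)"
  proof
    fix j
    have "(\<Sum>l<6. fls_const (c l) * adapted_basis l j)
        = (\<Sum>l<6. fls_const (if of_int (spec_exp l) = \<alpha> then c l else 0) * adapted_basis l j)
          + (\<Sum>l<6. fls_const (d l) * adapted_basis l j)"
      unfolding sum.distrib[symmetric] d_def by (rule sum.cong) (auto simp: fls_const_0)
    then show "x j - (\<Sum>l<6. fls_const (if of_int (spec_exp l) = \<alpha> then c l else 0) * adapted_basis l j)
        = x1 j + y1 j"
      unfolding x1_def y1_def by (simp add: algebra_simps)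
  qed
  moreover have adapted_x1: "adapted x1 l = adapted x l - fls_const (c l)" if "l < 6" for l
    unfolding x1_def adapted_diff using adapted_combination[OF that, of "\<lambda>l. fls_const (c l)"] by simp
  have x1E: "x1 \<in> Emod 6"
    using x unfolding x1_def Emod_def
    by (auto intro!: poly_fls_diff poly_fls_sum poly_fls_const_mult adapted_basis_poly simp: adapted_basis_high)
  have "adapted_order x1 \<alpha>"
    unfolding adapted_order_def
  proof (intro allI impI)
    fix l :: nat assume l: "l < 6"
    have ord: "val_ge (adapted x l) (\<alpha> - of_int (spec_exp l))"
      using x l Vfilt_iff_adapted_order unfolding adapted_order_def by blast
    then have "fls_nth (adapted x l) 0 = 0 \<or> \<alpha> - of_int (spec_exp l) \<le> 0"
      unfolding val_ge_def by force
    then show "val_ge (adapted x1 l) (\<alpha> - of_int (spec_exp l))"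
      unfolding adapted_x1[OF l] c_def adapted_const_def by (intro val_ge_diff ord val_ge_const)
  qed
  then have x1V: "x1 \<in> Vfilt 6 Astar \<alpha>" using Vfilt_iff_adapted_order x1E by blast
  have "val_ge (adapted x1 l) 1" if l: "l < 6" for l
    unfolding val_ge_def
  proof (intro allI impI)
    fix i :: int assume "of_int i < (1::rat)"
    then have "i < 0 \<or> i = 0" by linarith
    then show "fls_nth (adapted x1 l) i = 0"
      using adapted_Emod_val[of x l] x unfolding adapted_x1[OF l] c_def adapted_const_def val_ge_def
      by auto
  qed
  then have x1T: "x1 \<in> thetaE 6" using adapted_val_one_thetaE[OF x1E] by blast
  have "\<forall>l<6. d l \<noteq> 0 \<longrightarrow> of_int (\<lfloor>\<alpha>\<rfloor> + 1) \<le> rat_of_int (spec_exp l)"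
  proof (intro allI impI)
    fix l :: nat assume "l < 6" "d l \<noteq> 0"
    then have "of_int (spec_exp l) \<noteq> \<alpha>" "\<not> of_int (spec_exp l) < \<alpha>"
      using adapted_const_vanish[OF x] unfolding d_def c_def by auto
    then have "\<lfloor>\<alpha>\<rfloor> < spec_exp l" by (simp add: floor_less_iff)
    then show "of_int (\<lfloor>\<alpha>\<rfloor> + 1) \<le> rat_of_int (spec_exp l)" by simp
  qed
  then have "y1 \<in> Vfilt 6 Astar (of_int (\<lfloor>\<alpha>\<rfloor> + 1)) \<inter> Emod 6"
    unfolding y1_def by (rule constant_combination_Vfilt)
  moreover have "\<alpha> < of_int (\<lfloor>\<alpha>\<rfloor> + 1)" by linarith
  ultimately show ?thesis unfolding graded_denom_def Vgt_def c_def using x1V x1T by blast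
qed

(* sigma_l is nonzero modulo V^alpha_l cap theta E + V^(>alpha_l) cap E: the constant term of
   its l-th adapted coordinate is 1, whereas it vanishes on theta E and on V^(>alpha_l) cap E. *)
lemma graded_indep:
  assumes l: "l < 6" and c: "(\<lambda>j. fls_const c * adapted_basis l j) \<in> graded_denom (of_int (spec_exp l))"
  shows "c = 0"
proof -
  obtain x y where sum: "(\<lambda>j. fls_const c * adapted_basis l j) = (\<lambda>j. x j + y j)"
    and x: "x \<in> thetaE 6" and yV: "y \<in> Vgt 6 Astar (of_int (spec_exp l))" and yE: "y \<in> Emod 6"
    using c unfolding graded_denom_def by blast
  have "fls_const c = adapted x l + adapted y l"
    using arg_cong[OF sum, of "\<lambda>v. adapted v l"]
    unfolding adapted_add adapted_smul[of "fls_const c", unfolded smul_def] adapted_adapted_basis[OF l l]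
    by simp
  then have c_sum: "c = fls_nth (adapted x l) 0 + fls_nth (adapted y l) 0"
    by (metis fls_const_nth fls_plus_nth)
  obtain x' where x': "x' \<in> Emod 6" "x = smul fls_X x'" using x unfolding thetaE_def by blast
  then have "fls_nth (adapted x l) 0 = 0"
    using adapted_Emod_val[OF x'(1), of l] unfolding x'(2) adapted_smul val_ge_def by simp
  moreover obtain \<beta> where "\<beta> > of_int (spec_exp l)" "y \<in> Vfilt 6 Astar \<beta>"
    using yV unfolding Vgt_def by blast
  then have "fls_nth (adapted y l) 0 = 0"
    using Vfilt_iff_adapted_order[OF yE] l unfolding adapted_order_def val_ge_def by force
  ultimately show ?thesis using c_sum by simp
qed

lemma vsum_one: "vsum 1 (\<lambda>k. fls_const (c k)) (\<lambda>k. [s] ! k) = (\<lambda>i. fls_const (c 0) * s i)"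
  unfolding vsum_def by simp

lemma vsum_zero: "vsum 0 c s = (\<lambda>i. 0)"
  unfolding vsum_def by simp

lemma spectrum_mult_spec_exp:
  assumes l: "l < 6" shows "spectrum_mult 6 Astar (of_int (spec_exp l)) 1"
  unfolding spectrum_mult_def quot_dim_def graded_denom_def[symmetric]
proof (intro exI[of _ "[adapted_basis l]"] conjI allI impI ballI)
  show "length [adapted_basis l] = 1" by simp
  show "set [adapted_basis l] \<subseteq> Vfilt 6 Astar (of_int (spec_exp l)) \<inter> Emod 6"
    using adapted_basis_Vfilt[OF l] adapted_basis_Emod by simp
  fix c :: "nat \<Rightarrow> complex" and k :: nat
  assume "vsum 1 (\<lambda>k. fls_const (c k)) (\<lambda>k. [adapted_basis l] ! k) \<in> graded_denom (of_int (spec_exp l))"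
    and "k < 1"
  then show "c k = 0" using graded_indep[OF l] unfolding vsum_one by simp
next
  fix x assume x: "x \<in> Vfilt 6 Astar (of_int (spec_exp l)) \<inter> Emod 6"
  have "(\<Sum>t<6. fls_const (if spec_exp t = spec_exp l then adapted_const x t else 0) * adapted_basis t j)
      = fls_const (adapted_const x l) * adapted_basis l j" for j
  proof -
    have "(\<Sum>t<6. fls_const (if spec_exp t = spec_exp l then adapted_const x t else 0) * adapted_basis t j)
        = (\<Sum>t<6. if t = l then fls_const (adapted_const x l) * adapted_basis l j else 0)"
      by (rule sum.cong) (use spec_exp_inj l in \<open>auto simp: fls_const_0\<close>)
    then show ?thesis using l by simp
  qed
  then show "\<exists>c. (\<lambda>i. x i - vsum 1 (\<lambda>k. fls_const (c k)) (\<lambda>k. [adapted_basis l] ! k) i)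
      \<in> graded_denom (of_int (spec_exp l))"
    using graded_span[OF x] unfolding vsum_one by (intro exI[of _ "\<lambda>_. adapted_const x l"]) simp
qed

lemma spectrum_mult_other:
  assumes "\<forall>l<6. of_int (spec_exp l) \<noteq> \<alpha>" shows "spectrum_mult 6 Astar \<alpha> 0"
  unfolding spectrum_mult_def quot_dim_def graded_denom_def[symmetric]
proof (intro exI[of _ "[]"] conjI allI impI ballI)
  fix x assume x: "x \<in> Vfilt 6 Astar \<alpha> \<inter> Emod 6"
  have "(\<Sum>l<6. fls_const (if of_int (spec_exp l) = \<alpha> then adapted_const x l else 0) * adapted_basis l j)
      = 0" for j
    using assms by (intro sum.neutral) (auto simp: fls_const_0)
  then show "\<exists>c. (\<lambda>i. x i - vsum 0 (\<lambda>k. fls_const (c k)) (\<lambda>k. [] ! k) i) \<in> graded_denom \<alpha>"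
    using graded_span[OF x] unfolding vsum_zero by simp
qed auto

theorem mainTheorem11:
  shows "regular_singular 6 Astar \<and>
         (\<forall>\<alpha>::rat. spectrum_mult 6 Astar \<alpha> (count {#-2, 1, 2, 3, 4, 7#} \<alpha>))"
proof (intro conjI allI)
  show "regular_singular 6 Astar" by (rule regular_singular_Astar)
  fix \<alpha> :: rat
  have spec: "\<alpha> \<in> {-2, 1, 2, 3, 4, 7} \<longleftrightarrow> (\<exists>l<6. \<alpha> = of_int (spec_exp l))"
    unfolding less_6_cases by (simp add: conj_disj_distribR ex_disj_distrib spec_exp_def)
  show "spectrum_mult 6 Astar \<alpha> (count {#-2, 1, 2, 3, 4, 7#} \<alpha>)"
  proof (cases "\<alpha> \<in> {-2, 1, 2, 3, 4, 7}")
    case True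
    then obtain l where "l < 6" "\<alpha> = of_int (spec_exp l)" using spec by blast
    moreover have "count {#-2, 1, 2, 3, 4, 7#} \<alpha> = 1" using True by auto
    ultimately show ?thesis using spectrum_mult_spec_exp by simp
  next
    case False
    then have "count {#-2, 1, 2, 3, 4, 7#} \<alpha> = 0" by auto
    moreover have "\<forall>l<6. of_int (spec_exp l) \<noteq> \<alpha>" using False spec by auto
    ultimately show ?thesis using spectrum_mult_other by simp
  qed
qed

end
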